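(* Let $h,k\ge0$ be integers. For every digraph $G$ there is a partition of $V(G)$ into three sets $P,Q,R$ (possibly empty) such that $G[P]$ is $(h,k)$-out-orderable, $G[Q]$ is $(h,k)$-in-orderable, and $G[R]$ is $(h,k)$-robust.
   Context: Digraphs are finite, with no loops, parallel edges or antiparallel pairs; $\chi(X)$ denotes the chromatic number of the underlying undirected graph of $G[X]$. A digraph $G$ is $(h,k)$-out-orderable if there is a partition $X_1,\dots,X_n$ of $V(G)$ such that for each $i$, $\chi(X_i)\le h$ and each vertex of $X_i$ has at most $k-1$ out-neighbours in $X_{i+1}\cup\dots\cup X_n$; $(h,k)$-in-orderable is defined identically with in-neighbours in place of out-neighbours. A digraph $G$ is $(h,k)$-robust if for every nonempty $Z\subseteq V(G)$ with $\chi(Z)\le h$, some vertex of $Z$ has at least $k$ out-neighbours in $V(G)\setminus Z$ and at least $k$ in-neighbours in $V(G)\setminus Z$. *)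

theory Defs
  imports Main
begin

definition digraph :: "'a set \<Rightarrow> ('a \<times> 'a) set \<Rightarrow> bool" where
  "digraph V E \<longleftrightarrow> finite V \<and> E \<subseteq> V \<times> V \<and> (\<forall>v. (v, v) \<notin> E)
     \<and> (\<forall>u v. (u, v) \<in> E \<longrightarrow> (v, u) \<notin> E)"

definition induced :: "('a \<times> 'a) set \<Rightarrow> 'a set \<Rightarrow> ('a \<times> 'a) set" where
  "induced E X = E \<inter> (X \<times> X)"

definition colourable :: "('a \<times> 'a) set \<Rightarrow> 'a set \<Rightarrow> nat \<Rightarrow> bool" where
  "colourable E X h \<longleftrightarrow> (\<exists>c :: 'a \<Rightarrow> nat. (\<forall>x\<in>X. c x < h) \<and>
     (\<forall>u\<in>X. \<forall>v\<in>X. ((u, v) \<in> E \<or> (v, u) \<in> E) \<longrightarrow> c u \<noteq> c v))"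

definition chi :: "('a \<times> 'a) set \<Rightarrow> 'a set \<Rightarrow> nat" where
  "chi E X = (LEAST h. colourable E X h)"

definition out_nbrs :: "('a \<times> 'a) set \<Rightarrow> 'a \<Rightarrow> 'a set \<Rightarrow> 'a set" where
  "out_nbrs E v S = {w \<in> S. (v, w) \<in> E}"

definition in_nbrs :: "('a \<times> 'a) set \<Rightarrow> 'a \<Rightarrow> 'a set \<Rightarrow> 'a set" where
  "in_nbrs E v S = {w \<in> S. (w, v) \<in> E}"

definition ordered_partition :: "'a set list \<Rightarrow> 'a set \<Rightarrow> bool" where
  "ordered_partition Xs V \<longleftrightarrow> (\<forall>i<length Xs. Xs ! i \<noteq> {}) \<and>
     (\<forall>i<length Xs. \<forall>j<length Xs. i \<noteq> j \<longrightarrow> Xs ! i \<inter> Xs ! j = {}) \<and>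
     \<Union> (set Xs) = V"

text \<open>"at most k-1 out-neighbours" is rendered as "fewer than k" (so for k = 0 it is
  unsatisfiable, as with the integer reading of k - 1 = -1).\<close>
definition out_orderable :: "nat \<Rightarrow> nat \<Rightarrow> 'a set \<Rightarrow> ('a \<times> 'a) set \<Rightarrow> bool" where
  "out_orderable h k V E \<longleftrightarrow> (\<exists>Xs. ordered_partition Xs V \<and>
     (\<forall>i<length Xs. chi E (Xs ! i) \<le> h \<and>
        (\<forall>v\<in>Xs ! i. card (out_nbrs E v (\<Union>j\<in>{i<..<length Xs}. Xs ! j)) < k)))"

definition in_orderable :: "nat \<Rightarrow> nat \<Rightarrow> 'a set \<Rightarrow> ('a \<times> 'a) set \<Rightarrow> bool" where
  "in_orderable h k V E \<longleftrightarrow> (\<exists>Xs. ordered_partition Xs V \<and>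
     (\<forall>i<length Xs. chi E (Xs ! i) \<le> h \<and>
        (\<forall>v\<in>Xs ! i. card (in_nbrs E v (\<Union>j\<in>{i<..<length Xs}. Xs ! j)) < k)))"

definition robust :: "nat \<Rightarrow> nat \<Rightarrow> 'a set \<Rightarrow> ('a \<times> 'a) set \<Rightarrow> bool" where
  "robust h k V E \<longleftrightarrow> (\<forall>Z. Z \<noteq> {} \<and> Z \<subseteq> V \<and> chi E Z \<le> h \<longrightarrow>
     (\<exists>v\<in>Z. card (out_nbrs E v (V - Z)) \<ge> k \<and> card (in_nbrs E v (V - Z)) \<ge> k))"

end

theory Submission
  imports Defs
begin

text \<open>Induction on the vertex set. If G is (h,k)-robust, take R = V(G). Otherwise there is a
  nonempty set Z with \<open>\<chi>(Z) \<le> h\<close> every vertex of which has fewer than k out-neighbours or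
  fewer than k in-neighbours outside Z. Split Z accordingly into two parts, partition
  G - Z by induction, and prepend the two parts as first blocks to the out-ordering of P
  and the in-ordering of Q respectively. In-orderability is out-orderability of the reversed
  digraph, so only the out-case needs a proof.\<close>

lemma colourable_induced:
  assumes "X \<subseteq> W"
  shows "colourable (induced E W) X h \<longleftrightarrow> colourable E X h"
  unfolding colourable_def induced_def using assms by blast

lemma chi_induced:
  assumes "X \<subseteq> W"
  shows "chi (induced E W) X = chi E X"
  unfolding chi_def using colourable_induced[OF assms] by presburger

lemma out_nbrs_induced:
  assumes "v \<in> W" and "S \<subseteq> W"
  shows "out_nbrs (induced E W) v S = out_nbrs E v S"
  unfolding out_nbrs_def induced_def using assms by blast

lemma in_nbrs_induced:
  assumes "v \<in> W" and "S \<subseteq> W"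
  shows "in_nbrs (induced E W) v S = in_nbrs E v S"
  unfolding in_nbrs_def induced_def using assms by blast

lemma card_out_nbrs_mono:
  assumes "finite S" and "T \<subseteq> S"
  shows "card (out_nbrs E v T) \<le> card (out_nbrs E v S)"
  using assms by (intro card_mono) (auto simp: out_nbrs_def)

lemma card_in_nbrs_mono:
  assumes "finite S" and "T \<subseteq> S"
  shows "card (in_nbrs E v T) \<le> card (in_nbrs E v S)"
  using assms by (intro card_mono) (auto simp: in_nbrs_def)

lemma colourable_converse: "colourable (E\<inverse>) X h \<longleftrightarrow> colourable E X h"
  unfolding colourable_def by blast

lemma chi_converse: "chi (E\<inverse>) X = chi E X"
  unfolding chi_def colourable_converse ..

lemma out_nbrs_converse: "out_nbrs (E\<inverse>) v S = in_nbrs E v S"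
  unfolding out_nbrs_def in_nbrs_def by simp

lemma induced_converse: "induced (E\<inverse>) X = (induced E X)\<inverse>"
  unfolding induced_def by blast

lemma in_orderable_iff_out_orderable_converse:
  "in_orderable h k V E \<longleftrightarrow> out_orderable h k V (E\<inverse>)"
  unfolding in_orderable_def out_orderable_def chi_converse out_nbrs_converse ..

lemma colourable_card:
  assumes "finite X" and "irrefl E"
  shows "colourable E X (card X)"
proof -
  obtain c where c: "bij_betw c X {0..<card X}"
    using ex_bij_betw_finite_nat[OF \<open>finite X\<close>] by blast
  have "c u \<noteq> c v" if "u \<in> X" "v \<in> X" "(u, v) \<in> E \<or> (v, u) \<in> E" for u v
  proof -
    from that(3) \<open>irrefl E\<close> have "u \<noteq> v" by (auto simp: irrefl_def)
    with c that(1,2) show ?thesis by (auto simp: bij_betw_def inj_on_def)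
  qed
  moreover have "\<forall>x\<in>X. c x < card X" using c by (auto simp: bij_betw_def)
  ultimately show ?thesis unfolding colourable_def by blast
qed

lemma colourable_chi:
  assumes "finite X" and "irrefl E"
  shows "colourable E X (chi E X)"
  unfolding chi_def by (rule LeastI) (rule colourable_card[OF assms])

lemma colourable_mono:
  assumes "colourable E X h" and "Y \<subseteq> X" and "h \<le> h'"
  shows "colourable E Y h'"
proof -
  from assms(1) obtain c where "\<forall>x\<in>X. c x < h"
    and "\<forall>u\<in>X. \<forall>v\<in>X. ((u, v) \<in> E \<or> (v, u) \<in> E) \<longrightarrow> c u \<noteq> c v"
    unfolding colourable_def by blast
  with assms(2,3) show ?thesis
    unfolding colourable_def by (intro exI[of _ c]) (auto intro: less_le_trans)
qed

lemma chi_mono: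
  assumes "finite X" and "irrefl E" and "Y \<subseteq> X"
  shows "chi E Y \<le> chi E X"
  unfolding chi_def[of E Y]
  by (rule Least_le) (rule colourable_mono[OF colourable_chi[OF assms(1,2)] assms(3) order_refl])

lemma UN_nth_greaterThanLessThan_Cons:
  "(\<Union>j\<in>{0<..<length (Z # Xs)}. (Z # Xs) ! j) = \<Union> (set Xs)"
  "(\<Union>j\<in>{Suc i<..<length (Z # Xs)}. (Z # Xs) ! j) = (\<Union>j\<in>{i<..<length Xs}. Xs ! j)"
proof -
  have "{0<..<Suc n} = Suc ` {0..<n}" for n :: nat
    by (simp flip: atLeastSucLessThan_greaterThanLessThan)
  then show "(\<Union>j\<in>{0<..<length (Z # Xs)}. (Z # Xs) ! j) = \<Union> (set Xs)"
    by (simp add: set_conv_nth atLeast0LessThan) (auto simp: image_iff)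
  have "{Suc i<..<Suc n} = Suc ` {i<..<n}" for n :: nat
    by (simp flip: atLeastSucLessThan_greaterThanLessThan)
  then show "(\<Union>j\<in>{Suc i<..<length (Z # Xs)}. (Z # Xs) ! j) = (\<Union>j\<in>{i<..<length Xs}. Xs ! j)"
    by simp
qed

lemma ordered_partition_Nil: "ordered_partition [] {}"
  unfolding ordered_partition_def by simp

lemma ordered_partition_Cons:
  assumes "ordered_partition Xs P" and "Z \<noteq> {}" and "Z \<inter> P = {}"
  shows "ordered_partition (Z # Xs) (Z \<union> P)"
  unfolding ordered_partition_def
proof (intro conjI allI impI)
  have parts: "Xs ! m \<subseteq> P" if "m < length Xs" for m
    using assms(1) that nth_mem unfolding ordered_partition_def by blast
  fix i assume "i < length (Z # Xs)"
  then show "(Z # Xs) ! i \<noteq> {}"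
    using assms unfolding ordered_partition_def by (cases i) auto
  fix j assume "j < length (Z # Xs)" and "i \<noteq> j"
  with \<open>i < length (Z # Xs)\<close> show "(Z # Xs) ! i \<inter> (Z # Xs) ! j = {}"
  proof (cases i; cases j)
    fix a b assume "i = Suc a" "j = Suc b"
    with \<open>i < length (Z # Xs)\<close> \<open>j < length (Z # Xs)\<close> \<open>i \<noteq> j\<close> assms(1)
    show ?thesis unfolding ordered_partition_def by simp
  qed (use assms(3) parts in auto)
next
  show "\<Union> (set (Z # Xs)) = Z \<union> P"
    using assms(1) unfolding ordered_partition_def by simp
qed

lemma out_orderable_empty: "out_orderable h k {} E"
  unfolding out_orderable_def using ordered_partition_Nil by fastforce

lemma out_orderable_Cons:
  assumes P: "out_orderable h k P (induced E P)"
    and "Z \<inter> P = {}" and "chi E Z \<le> h" and "\<forall>v\<in>Z. card (out_nbrs E v P) < k"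
  shows "out_orderable h k (Z \<union> P) (induced E (Z \<union> P))"
proof (cases "Z = {}")
  case True
  then show ?thesis using P by simp
next
  case False
  from P obtain Xs where Xs: "ordered_partition Xs P"
    and blocks: "\<And>i. i < length Xs \<Longrightarrow> chi (induced E P) (Xs ! i) \<le> h \<and>
      (\<forall>v\<in>Xs ! i. card (out_nbrs (induced E P) v (\<Union>j\<in>{i<..<length Xs}. Xs ! j)) < k)"
    unfolding out_orderable_def by blast
  have parts: "Xs ! i \<subseteq> P" if "i < length Xs" for i
    using Xs that nth_mem unfolding ordered_partition_def by blast
  have tail: "(\<Union>j\<in>{i<..<length Xs}. Xs ! j) \<subseteq> P" for i
    by (intro UN_least parts) simp
  have "chi (induced E (Z \<union> P)) ((Z # Xs) ! i) \<le> h \<and>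
      (\<forall>v\<in>(Z # Xs) ! i. card (out_nbrs (induced E (Z \<union> P)) v
         (\<Union>j\<in>{i<..<length (Z # Xs)}. (Z # Xs) ! j)) < k)"
    if "i < length (Z # Xs)" for i
  proof (cases i)
    case 0
    have "(\<Union>j\<in>{i<..<length (Z # Xs)}. (Z # Xs) ! j) = P"
      unfolding 0 UN_nth_greaterThanLessThan_Cons(1) using Xs unfolding ordered_partition_def by simp
    with 0 assms(3,4) show ?thesis
      by (simp add: chi_induced out_nbrs_induced)
  next
    case (Suc m)
    with that have m: "m < length Xs" by simp
    let ?T = "\<Union>j\<in>{m<..<length Xs}. Xs ! j"
    have "chi (induced E (Z \<union> P)) (Xs ! m) = chi (induced E P) (Xs ! m)"
      using parts[OF m] by (metis chi_induced le_supI2)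
    moreover have "out_nbrs (induced E (Z \<union> P)) v ?T = out_nbrs (induced E P) v ?T"
      if "v \<in> Xs ! m" for v
      using that parts[OF m] tail[of m] by (metis out_nbrs_induced le_supI2 subsetD)
    ultimately show ?thesis
      using blocks[OF m] unfolding Suc UN_nth_greaterThanLessThan_Cons(2) by simp
  qed
  with ordered_partition_Cons[OF Xs False assms(2)] show ?thesis
    unfolding out_orderable_def by blast
qed

lemma in_orderable_Cons:
  assumes "in_orderable h k Q (induced E Q)"
    and "Z \<inter> Q = {}" and "chi E Z \<le> h" and "\<forall>v\<in>Z. card (in_nbrs E v Q) < k"
  shows "in_orderable h k (Z \<union> Q) (induced E (Z \<union> Q))"
  using out_orderable_Cons[of h k Q "E\<inverse>" Z] assms
  by (simp add: in_orderable_iff_out_orderable_converse induced_converse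
      chi_converse out_nbrs_converse)

definition out_in_robust_partition ::
    "nat \<Rightarrow> nat \<Rightarrow> ('a \<times> 'a) set \<Rightarrow> 'a set \<Rightarrow> 'a set \<Rightarrow> 'a set \<Rightarrow> 'a set \<Rightarrow> bool" where
  "out_in_robust_partition h k E W P Q R \<longleftrightarrow>
     P \<union> Q \<union> R = W \<and> P \<inter> Q = {} \<and> P \<inter> R = {} \<and> Q \<inter> R = {} \<and>
     out_orderable h k P (induced E P) \<and> in_orderable h k Q (induced E Q) \<and>
     robust h k R (induced E R)"

lemma robust_induced_iff:
  "robust h k W (induced E W) \<longleftrightarrow>
     (\<forall>Z. Z \<noteq> {} \<and> Z \<subseteq> W \<and> chi E Z \<le> h \<longrightarrow>
        (\<exists>v\<in>Z. card (out_nbrs E v (W - Z)) \<ge> k \<and> card (in_nbrs E v (W - Z)) \<ge> k))"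
  unfolding robust_def
  by (intro all_cong1 imp_cong bex_cong refl)
    (auto simp: chi_induced out_nbrs_induced in_nbrs_induced)

lemma out_in_robust_partition_robust:
  assumes "robust h k W (induced E W)"
  shows "out_in_robust_partition h k E W {} {} W"
  using assms unfolding out_in_robust_partition_def
  by (simp add: in_orderable_iff_out_orderable_converse out_orderable_empty)

lemma out_in_robust_partition_extend:
  assumes partition: "out_in_robust_partition h k E U P Q R"
    and "finite U" and "finite Z" and "irrefl E" and "Z \<inter> U = {}" and "chi E Z \<le> h"
    and weak: "\<forall>v\<in>Z. card (out_nbrs E v U) < k \<or> card (in_nbrs E v U) < k"
  obtains P' Q' where "out_in_robust_partition h k E (Z \<union> U) P' Q' R"
proof -
  define Zout where "Zout = {v \<in> Z. card (out_nbrs E v U) < k}"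
  define Zin where "Zin = Z - Zout"
  have "Zout \<subseteq> Z" "Zin \<subseteq> Z" "Zout \<union> Zin = Z" "Zout \<inter> Zin = {}"
    unfolding Zin_def Zout_def by auto
  from partition have PQR: "P \<union> Q \<union> R = U" "P \<inter> Q = {}" "P \<inter> R = {}" "Q \<inter> R = {}"
    and P: "out_orderable h k P (induced E P)" and Q: "in_orderable h k Q (induced E Q)"
    and R: "robust h k R (induced E R)"
    unfolding out_in_robust_partition_def by simp_all
  have "P \<subseteq> U" "Q \<subseteq> U" using PQR(1) by blast+
  have "out_orderable h k (Zout \<union> P) (induced E (Zout \<union> P))"
  proof (rule out_orderable_Cons[OF P])
    show "Zout \<inter> P = {}" using \<open>Zout \<subseteq> Z\<close> \<open>P \<subseteq> U\<close> \<open>Z \<inter> U = {}\<close> by blast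
    show "chi E Zout \<le> h"
      using chi_mono[OF \<open>finite Z\<close> \<open>irrefl E\<close> \<open>Zout \<subseteq> Z\<close>] \<open>chi E Z \<le> h\<close> by linarith
    show "\<forall>v\<in>Zout. card (out_nbrs E v P) < k"
      using card_out_nbrs_mono[OF \<open>finite U\<close> \<open>P \<subseteq> U\<close>] unfolding Zout_def
      by (blast intro: le_less_trans)
  qed
  moreover have "in_orderable h k (Zin \<union> Q) (induced E (Zin \<union> Q))"
  proof (rule in_orderable_Cons[OF Q])
    show "Zin \<inter> Q = {}" using \<open>Zin \<subseteq> Z\<close> \<open>Q \<subseteq> U\<close> \<open>Z \<inter> U = {}\<close> by blast
    show "chi E Zin \<le> h"
      using chi_mono[OF \<open>finite Z\<close> \<open>irrefl E\<close> \<open>Zin \<subseteq> Z\<close>] \<open>chi E Z \<le> h\<close> by linarith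
    have "card (in_nbrs E v U) < k" if "v \<in> Zin" for v
      using weak that unfolding Zin_def Zout_def by blast
    then show "\<forall>v\<in>Zin. card (in_nbrs E v Q) < k"
      using card_in_nbrs_mono[OF \<open>finite U\<close> \<open>Q \<subseteq> U\<close>] by (blast intro: le_less_trans)
  qed
  moreover have "(Zout \<union> P) \<union> (Zin \<union> Q) \<union> R = Z \<union> U"
    using PQR(1) \<open>Zout \<union> Zin = Z\<close> by blast
  moreover have "(Zout \<union> P) \<inter> (Zin \<union> Q) = {}" "(Zout \<union> P) \<inter> R = {}" "(Zin \<union> Q) \<inter> R = {}"
    using PQR \<open>Zout \<subseteq> Z\<close> \<open>Zin \<subseteq> Z\<close> \<open>Zout \<inter> Zin = {}\<close> \<open>Z \<inter> U = {}\<close> by blast+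
  ultimately have "out_in_robust_partition h k E (Z \<union> U) (Zout \<union> P) (Zin \<union> Q) R"
    using R unfolding out_in_robust_partition_def by blast
  then show ?thesis by (rule that)
qed

lemma out_in_robust_partition_exists:
  assumes "finite W" and "irrefl E"
  shows "\<exists>P Q R. out_in_robust_partition h k E W P Q R"
  using assms(1)
proof (induction W rule: finite_psubset_induct)
  case (psubset W)
  show ?case
  proof (cases "robust h k W (induced E W)")
    case True
    then show ?thesis using out_in_robust_partition_robust by blast
  next
    case False
    then obtain Z where Z: "Z \<noteq> {}" "Z \<subseteq> W" "chi E Z \<le> h"
      and not_both: "\<not> (\<exists>v\<in>Z. card (out_nbrs E v (W - Z)) \<ge> k \<and> card (in_nbrs E v (W - Z)) \<ge> k)"
      unfolding robust_induced_iff not_all not_imp by blast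
    from not_both have weak:
      "\<forall>v\<in>Z. card (out_nbrs E v (W - Z)) < k \<or> card (in_nbrs E v (W - Z)) < k"
      by auto
    from Z have "W - Z \<subset> W" by blast
    with psubset.IH obtain P Q R where "out_in_robust_partition h k E (W - Z) P Q R"
      by blast
    then obtain P' Q' where "out_in_robust_partition h k E (Z \<union> (W - Z)) P' Q' R"
    proof (rule out_in_robust_partition_extend)
      show "finite (W - Z)" "finite Z" using psubset.hyps Z(2) finite_subset by blast+
    qed (use assms(2) Z(3) weak in auto)
    moreover have "Z \<union> (W - Z) = W" using Z(2) by blast
    ultimately show ?thesis by auto
  qed
qed

theorem theorem3p5:
  fixes h k :: nat and V :: "'a set" and E :: "('a \<times> 'a) set"
  assumes "digraph V E"
  shows "\<exists>P Q R. P \<union> Q \<union> R = V \<and> P \<inter> Q = {} \<and> P \<inter> R = {} \<and> Q \<inter> R = {} \<and>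
           out_orderable h k P (induced E P) \<and>
           in_orderable h k Q (induced E Q) \<and>
           robust h k R (induced E R)"
proof -
  from assms have "finite V" and "irrefl E"
    unfolding digraph_def irrefl_def by auto
  then obtain P Q R where "out_in_robust_partition h k E V P Q R"
    using out_in_robust_partition_exists by blast
  then show ?thesis unfolding out_in_robust_partition_def by blast
qed

end
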